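(* Let $c_1,\dots,c_k\in(0,\infty)$ be fixed constants, and let $\lambda\in(0,\infty)^k$ be a tuning parameter satisfying, for every $j\in\{1,\dots,k\}$, $$\frac{\lambda_j}{2g'(\|Y-X\hat\beta^\lambda\|_2^2)}=c_j\,\|(XP_jM_j^{+})^\top\varepsilon\|_{q_j}^*$$ (such a $\lambda$ exists with probability one). Then, with probability one, for any minimizer $\hat\beta^\lambda$ of the objective below, $$\frac1n\|X(\beta^*-\hat\beta^\lambda)\|_2^2\le\inf_{u\in(0,1),\,\beta\in\mathbb{R}^p}\Big\{\frac{1}{4u(1-u)n}\|X(\beta^*-\beta)\|_2^2+\frac1n\sum_{j=1}^k\frac{1+c_j}{1-u}\|(XP_jM_j^{+})^\top\varepsilon\|_{q_j}^*\,\|M_j\beta\|_{q_j}-\frac1n\sum_{j=1}^k\frac{c_j-1}{1-u}\|(XP_jM_j^{+})^\top\varepsilon\|_{q_j}^*\,\|M_j\hat\beta^\lambda\|_{q_j}\Big\}.$$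
   Context: Standing setup. Model: $Y=X\beta^*+\varepsilon$ with $Y\in\mathbb{R}^n$, $X\in\mathbb{R}^{n\times p}$, $\beta^*\in\mathbb{R}^p$, $\varepsilon\in\mathbb{R}^n$ (random; no distributional assumptions beyond those below). Link function $g:\mathbb{R}\to[0,\infty)$ with $g(0)=0$, $g$ continuous and strictly increasing on $[0,\infty)$, continuously differentiable on $(0,\infty)$ with strictly positive and non-increasing derivative $g'$, and such that $\alpha\mapsto g(\|\alpha\|_2^2)$ is strictly convex on $\mathbb{R}^n$. Penalty: $k\ge1$, matrices $M_1,\dots,M_k\in\mathbb{R}^{p\times p}$ with $\bigcap_{j=1}^k\mathrm{Ker}(M_j)=\{0\}$, exponents $q_j\ge1$, $\|\cdot\|_{q_j}$ the $\ell_{q_j}$-norm on $\mathbb{R}^p$, and $\|\cdot\|_{q_j}^*$ its dual norm (the $\ell_{p_j}$-norm with $1/p_j+1/q_j=1$). For $\lambda\in(0,\infty)^k$, $\hat\beta^\lambda$ denotes any element of $\arg\min_{\beta\in\mathbb{R}^p}\{g(\|Y-X\beta\|_2^2)+\sum_{j=1}^k\lambda_j\|M_j\beta\|_{q_j}\}$. $A^+$ denotes the Moore–Penrose pseudoinverse; $P_1,\dots,P_k\in\mathbb{R}^{p\times p}$ are fixed projection matrices with $\sum_{j=1}^kP_jM_j^+M_j=I_{p\times p}$. Noise assumption: with probability one, $Y\neq0$ and $\min_{j}\|(XP_jM_j^{+})^\top\varepsilon\|_{q_j}^*>0$. *)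

theory Defs
  imports "HOL-Analysis.Analysis"
begin

definition strict_convex_on :: "'a::real_vector set \<Rightarrow> ('a \<Rightarrow> real) \<Rightarrow> bool" where
  "strict_convex_on S f \<longleftrightarrow> convex S \<and>
     (\<forall>x\<in>S. \<forall>y\<in>S. \<forall>t. x \<noteq> y \<longrightarrow> 0 < t \<longrightarrow> t < 1 \<longrightarrow>
        f ((1 - t) *\<^sub>R x + t *\<^sub>R y) < (1 - t) * f x + t * f y)"

definition lq_norm :: "real \<Rightarrow> real ^ 'p \<Rightarrow> real" where
  "lq_norm q x = (\<Sum>i\<in>UNIV. \<bar>x $ i\<bar> powr q) powr (1 / q)"

definition lq_dual_norm :: "real \<Rightarrow> real ^ 'p \<Rightarrow> real" where
  "lq_dual_norm q y = Sup {x \<bullet> y | x. lq_norm q x \<le> 1}"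

definition pinv :: "real ^ 'n ^ 'm \<Rightarrow> real ^ 'm ^ 'n" where
  "pinv A = (THE B. A ** B ** A = A \<and> B ** A ** B = B \<and>
                    transpose (A ** B) = A ** B \<and> transpose (B ** A) = B ** A)"

end

theory Submission
  imports Defs
begin

text \<open>
  Since \<open>g'\<close> is non-increasing, \<open>g\<close> lies below its tangent at the residual
  \<open>r = \<parallel>Y - X \<beta>hat\<parallel>\<^sup>2 > 0\<close>, and the penalty is convex. Comparing the objective at
  \<open>\<beta>hat\<close> with its value at \<open>\<beta>hat + t (\<beta> - \<beta>hat)\<close> and letting \<open>t \<rightarrow> 0\<close> gives the
  first-order inequality \<open>pen \<beta>hat - pen \<beta> \<le> 2 g' r \<langle>Y - X \<beta>hat, X (\<beta>hat - \<beta>)\<rangle>\<close>, whose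
  left side is \<open>2 g' r \<Sum>\<^sub>j c\<^sub>j D\<^sub>j (\<parallel>M\<^sub>j \<beta>hat\<parallel> - \<parallel>M\<^sub>j \<beta>\<parallel>)\<close> by the choice of \<open>\<lambda>\<close>.
  Writing \<open>X d = \<Sum>\<^sub>j (X P\<^sub>j M\<^sub>j\<^sup>+) (M\<^sub>j d)\<close>, H\<ouml>lder's inequality bounds the noise term
  \<open>\<langle>\<epsilon>, X (\<beta>hat - \<beta>)\<rangle>\<close> by \<open>\<Sum>\<^sub>j D\<^sub>j \<parallel>M\<^sub>j (\<beta>hat - \<beta>)\<parallel>\<close>. With \<open>a = X (\<beta>star - \<beta>hat)\<close>
  and \<open>b = X (\<beta>star - \<beta>)\<close> this is a basic inequality \<open>\<parallel>a\<parallel>\<^sup>2 \<le> \<langle>a, b\<rangle> + T\<close>, and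
  \<open>\<langle>a, b\<rangle> \<le> u \<parallel>a\<parallel>\<^sup>2 + \<parallel>b\<parallel>\<^sup>2 / (4 u)\<close> turns it into the oracle inequality.
\<close>

lemma powr_convex_nonneg:
  assumes "q \<ge> 1"
  shows "convex_on {0..} (\<lambda>x::real. x powr q)"
proof (rule convex_on_linorderI)
  fix t x y :: real
  assume t: "0 < t" "t < 1" and xy: "x \<in> {0..}" "y \<in> {0..}" "x < y"
  show "((1 - t) *\<^sub>R x + t *\<^sub>R y) powr q \<le> (1 - t) * x powr q + t * y powr q"
  proof (cases "x = 0")
    case True
    have "t powr q \<le> t"
      using powr_mono'[of 1 q t] assms t by simp
    then have "t powr q * y powr q \<le> t * y powr q"
      by (intro mult_right_mono) auto
    with True t show ?thesis by (simp add: powr_mult)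
  next
    case False
    with xy show ?thesis
      using convex_onD[OF powr_convex[OF assms], of t x y] t by simp
  qed
qed simp

lemma convex_on_abs_powr:
  assumes "q \<ge> 1"
  shows "convex_on UNIV (\<lambda>x::real. \<bar>x\<bar> powr q)"
proof (rule convex_onI)
  fix t x y :: real
  assume t: "0 < t" "t < 1"
  have "\<bar>(1 - t) *\<^sub>R x + t *\<^sub>R y\<bar> \<le> (1 - t) * \<bar>x\<bar> + t * \<bar>y\<bar>"
    using t abs_triangle_ineq[of "(1 - t) * x" "t * y"] by (simp add: abs_mult)
  then have "\<bar>(1 - t) *\<^sub>R x + t *\<^sub>R y\<bar> powr q \<le> ((1 - t) * \<bar>x\<bar> + t * \<bar>y\<bar>) powr q"
    using assms by (intro powr_mono2) auto
  also have "\<dots> \<le> (1 - t) * \<bar>x\<bar> powr q + t * \<bar>y\<bar> powr q"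
    using convex_onD[OF powr_convex_nonneg[OF assms], of t "\<bar>x\<bar>" "\<bar>y\<bar>"] t by simp
  finally show "\<bar>(1 - t) *\<^sub>R x + t *\<^sub>R y\<bar> powr q \<le> (1 - t) * \<bar>x\<bar> powr q + t * \<bar>y\<bar> powr q" .
qed simp

lemma convex_on_compose_linear:
  assumes "linear h" "convex_on UNIV f"
  shows "convex_on UNIV (\<lambda>x. f (h x))"
proof (rule convex_onI)
  fix t :: real and x y
  assume "0 < t" "t < 1"
  then show "f (h ((1 - t) *\<^sub>R x + t *\<^sub>R y)) \<le> (1 - t) * f (h x) + t * f (h y)"
    using convex_onD[OF assms(2), of t "h x" "h y"]
    by (simp add: linear_add[OF assms(1)] linear_scale[OF assms(1)])
qed simp

lemma convex_on_sum_fun: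
  assumes "finite I" "convex S" "\<And>i. i \<in> I \<Longrightarrow> convex_on S (f i)"
  shows "convex_on S (\<lambda>x. \<Sum>i\<in>I. f i x)"
  using assms by (induction I rule: finite_induct) (auto simp: convex_on_const)

lemma lq_norm_nonneg: "lq_norm q x \<ge> 0"
  by (simp add: lq_norm_def)

lemma lq_norm_powr:
  assumes "q > 0"
  shows "lq_norm q x powr q = (\<Sum>i\<in>UNIV. \<bar>x $ i\<bar> powr q)"
  using assms by (simp add: lq_norm_def powr_powr sum_nonneg)

lemma lq_norm_scaleR:
  assumes "q > 0"
  shows "lq_norm q (c *\<^sub>R x) = \<bar>c\<bar> * lq_norm q x"
proof -
  have "(\<Sum>i\<in>UNIV. \<bar>(c *\<^sub>R x) $ i\<bar> powr q) = \<bar>c\<bar> powr q * (\<Sum>i\<in>UNIV. \<bar>x $ i\<bar> powr q)"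
    by (simp add: abs_mult powr_mult sum_distrib_left)
  then show ?thesis
    using assms by (simp add: lq_norm_def powr_mult sum_nonneg powr_powr)
qed

lemma lq_norm_uminus: "lq_norm q (- x) = lq_norm q x"
  by (simp add: lq_norm_def)

lemma lq_norm_pos:
  assumes "q > 0" "x \<noteq> 0"
  shows "lq_norm q x > 0"
proof -
  obtain i where "x $ i \<noteq> 0"
    using assms(2) by (auto simp: vec_eq_iff)
  then have "(\<Sum>i\<in>UNIV. \<bar>x $ i\<bar> powr q) > 0"
    by (intro sum_pos2[of _ i]) auto
  then show ?thesis
    by (simp add: lq_norm_def)
qed

lemma abs_component_le_lq_norm:
  assumes "q > 0"
  shows "\<bar>x $ i\<bar> \<le> lq_norm q x"
proof -
  have "\<bar>x $ i\<bar> powr q \<le> lq_norm q x powr q"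
    unfolding lq_norm_powr[OF assms] by (rule member_le_sum) auto
  then show ?thesis
    using assms lq_norm_nonneg powr_less_mono2 by (meson not_le)
qed

lemma lq_norm_triangle:
  assumes q: "q \<ge> 1"
  shows "lq_norm q (x + y) \<le> lq_norm q x + lq_norm q y"
proof (cases "x = 0 \<or> y = 0")
  case True
  then show ?thesis by (auto simp: lq_norm_nonneg)
next
  case False
  define F where "F = (\<lambda>z::real^'a. \<Sum>i\<in>UNIV. \<bar>z $ i\<bar> powr q)"
  have F: "F z = lq_norm q z powr q" for z
    unfolding F_def using lq_norm_powr[of q z] q by simp
  have "convex_on UNIV (\<lambda>z::real^'a. \<bar>z $ i\<bar> powr q)" for i
    using bounded_linear.linear[OF bounded_linear_vec_nth]
    by (rule convex_on_compose_linear[OF _ convex_on_abs_powr[OF q]])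
  then have "convex_on UNIV F"
    unfolding F_def by (intro convex_on_sum_fun) auto
  define a b where "a = lq_norm q x" and "b = lq_norm q y"
  have ab: "a > 0" "b > 0"
    using False q lq_norm_pos[of q] by (auto simp: a_def b_def)
  have unit: "F ((1 / a) *\<^sub>R x) = 1" "F ((1 / b) *\<^sub>R y) = 1"
    using ab q by (simp_all add: F lq_norm_scaleR a_def b_def)
  \<comment> \<open>Convexity of the unit ball: \<open>(x + y) / (a + b)\<close> is a convex combination of \<open>x / a\<close> and \<open>y / b\<close>.\<close>
  define t where "t = b / (a + b)"
  have t: "0 \<le> t" "t \<le> 1"
    using ab by (auto simp: t_def)
  have "(1 / (a + b)) *\<^sub>R (x + y) = (1 - t) *\<^sub>R ((1 / a) *\<^sub>R x) + t *\<^sub>R ((1 / b) *\<^sub>R y)"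
    using ab by (simp add: t_def field_simps scaleR_add_right)
  also have "F \<dots> \<le> (1 - t) * F ((1 / a) *\<^sub>R x) + t * F ((1 / b) *\<^sub>R y)"
    by (rule convex_onD[OF \<open>convex_on UNIV F\<close> t]) auto
  finally have "F ((1 / (a + b)) *\<^sub>R (x + y)) \<le> 1"
    by (simp add: unit)
  then have "lq_norm q ((1 / (a + b)) *\<^sub>R (x + y)) powr q \<le> 1 powr q"
    by (simp add: F)
  then have "lq_norm q ((1 / (a + b)) *\<^sub>R (x + y)) \<le> 1"
    using q by (meson not_le powr_less_mono2 zero_le_one less_le_trans zero_less_one)
  then have "lq_norm q (x + y) / (a + b) \<le> 1"
    using ab q lq_norm_scaleR[of q "1 / (a + b)" "x + y"] by simp
  then show ?thesis
    using ab by (simp add: a_def b_def)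
qed

lemma convex_on_lq_norm:
  assumes "q \<ge> 1"
  shows "convex_on UNIV (lq_norm q)"
proof (rule convex_onI)
  fix t :: real and x y :: "real^'a"
  assume t: "0 < t" "t < 1"
  have "lq_norm q ((1 - t) *\<^sub>R x + t *\<^sub>R y) \<le> lq_norm q ((1 - t) *\<^sub>R x) + lq_norm q (t *\<^sub>R y)"
    by (rule lq_norm_triangle[OF assms])
  also have "\<dots> = (1 - t) * lq_norm q x + t * lq_norm q y"
    using assms t by (simp add: lq_norm_scaleR)
  finally show "lq_norm q ((1 - t) *\<^sub>R x + t *\<^sub>R y) \<le> (1 - t) * lq_norm q x + t * lq_norm q y" .
qed simp

lemma inner_le_lq_dual_norm:
  assumes q: "q > 0"
  shows "x \<bullet> y \<le> lq_dual_norm q y * lq_norm q x"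
proof (cases "x = 0")
  case True
  then show ?thesis by (simp add: lq_norm_def)
next
  case False
  have bdd: "bdd_above {z \<bullet> y | z. lq_norm q z \<le> 1}"
  proof (rule bdd_aboveI[where M = "\<Sum>i\<in>UNIV. \<bar>y $ i\<bar>"], clarify)
    fix z :: "real^'a"
    assume z: "lq_norm q z \<le> 1"
    have "z $ i * y $ i \<le> \<bar>y $ i\<bar>" for i
    proof -
      have "\<bar>z $ i\<bar> \<le> 1"
        using abs_component_le_lq_norm[OF q, of z i] z by simp
      then have "\<bar>z $ i * y $ i\<bar> \<le> \<bar>y $ i\<bar>"
        by (simp add: abs_mult mult_left_le_one_le)
      then show ?thesis by simp
    qed
    then show "z \<bullet> y \<le> (\<Sum>i\<in>UNIV. \<bar>y $ i\<bar>)"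
      unfolding inner_vec_def by (intro sum_mono) simp
  qed
  define a where "a = lq_norm q x"
  have a: "a > 0"
    using lq_norm_pos[OF q False] by (simp add: a_def)
  have "lq_norm q ((1 / a) *\<^sub>R x) \<le> 1"
    using lq_norm_scaleR[OF q, of "1 / a" x] a by (simp add: a_def)
  then have "((1 / a) *\<^sub>R x) \<bullet> y \<le> lq_dual_norm q y"
    unfolding lq_dual_norm_def by (intro cSup_upper[OF _ bdd]) blast
  then show ?thesis
    using a by (simp add: a_def field_simps)
qed

lemma inner_matrix_le_sum_lq_dual_norm:
  fixes X :: "real^'p^'n" and A M :: "nat \<Rightarrow> real^'p^'p"
  assumes id: "(\<Sum>j<k. A j ** M j) = mat 1" and q: "\<And>j. j < k \<Longrightarrow> q j > 0"
  shows "e \<bullet> (X *v d)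
    \<le> (\<Sum>j<k. lq_dual_norm (q j) (transpose (X ** A j) *v e) * lq_norm (q j) (M j *v d))"
proof -
  have "X *v d = X *v ((\<Sum>j<k. A j ** M j) *v d)"
    using id by simp
  also have "\<dots> = (\<Sum>j<k. X *v (A j *v (M j *v d)))"
    by (induction k) (simp_all add: matrix_vector_mult_add_rdistrib matrix_vector_right_distrib
        matrix_vector_mul_assoc)
  also have "\<dots> = (\<Sum>j<k. (X ** A j) *v (M j *v d))"
    by (simp add: matrix_vector_mul_assoc matrix_mul_assoc)
  finally have "e \<bullet> (X *v d) = (\<Sum>j<k. (transpose (X ** A j) *v e) \<bullet> (M j *v d))"
    by (simp add: inner_sum_right dot_lmul_matrix)
  also have "\<dots> \<le> (\<Sum>j<k. lq_dual_norm (q j) (transpose (X ** A j) *v e) * lq_norm (q j) (M j *v d))"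
    using inner_le_lq_dual_norm[OF q] by (intro sum_mono) (simp add: inner_commute)
  finally show ?thesis .
qed

lemma le_tangent_of_deriv_antimono:
  fixes g g' :: "real \<Rightarrow> real"
  assumes cont: "continuous_on {0..} g"
    and deriv: "\<And>x. x > 0 \<Longrightarrow> (g has_real_derivative g' x) (at x)"
    and antimono: "\<And>x y. 0 < x \<Longrightarrow> x \<le> y \<Longrightarrow> g' y \<le> g' x"
    and r: "r > 0" and s: "s \<ge> 0"
  shows "g s \<le> g r + g' r * (s - r)"
proof -
  have mvt: "\<exists>z. a < z \<and> z < b \<and> g b - g a = (b - a) * g' z" if ab: "0 \<le> a" "a < b" for a b
  proof -
    have "continuous_on {a..b} g"
      using ab by (intro continuous_on_subset[OF cont]) auto
    moreover have "\<forall>x. a < x \<and> x < b \<longrightarrow> g differentiable (at x)"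
      using ab deriv real_differentiable_def by (metis order_le_less_trans)
    ultimately obtain l z where z: "a < z" "z < b" "DERIV g z :> l" "g b - g a = (b - a) * l"
      using MVT[OF \<open>a < b\<close>] by blast
    moreover have "l = g' z"
      using ab z by (intro DERIV_unique[OF z(3) deriv]) simp
    ultimately show ?thesis by blast
  qed
  consider "s < r" | "s = r" | "r < s"
    by linarith
  then show ?thesis
  proof cases
    case 1
    then obtain z where z: "s < z" "z < r" "g r - g s = (r - s) * g' z"
      using mvt[OF s] by blast
    have "(r - s) * g' r \<le> (r - s) * g' z"
      using z s antimono[of z r] by (intro mult_left_mono) auto
    with z show ?thesis by (simp add: algebra_simps)
  next
    case 3
    then obtain z where z: "r < z" "z < s" "g s - g r = (s - r) * g' z"
      using mvt[of r s] r by auto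
    have "(s - r) * g' z \<le> (s - r) * g' r"
      using z r antimono[of r z] by (intro mult_left_mono) auto
    with z show ?thesis by (simp add: algebra_simps)
  qed simp
qed

lemma le_of_le_add_mult:
  fixes A B C :: real
  assumes C: "C \<ge> 0" and le: "\<And>t. 0 < t \<Longrightarrow> t \<le> 1 \<Longrightarrow> A \<le> B + t * C"
  shows "A \<le> B"
proof (rule field_le_epsilon)
  fix e :: real
  assume e: "e > 0"
  define t where "t = min 1 (e / (C + 1))"
  have t: "0 < t" "t \<le> 1"
    using e C by (auto simp: t_def)
  have "t * C \<le> e / (C + 1) * C"
    using C by (intro mult_right_mono) (auto simp: t_def)
  also have "\<dots> \<le> e"
    using e C by (simp add: field_simps)
  finally show "A \<le> B + e"
    using le[OF t] by linarith
qed

lemma penalized_first_order_condition: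
  fixes X :: "'a::real_vector \<Rightarrow> 'b::real_inner" and pen :: "'a \<Rightarrow> real"
  assumes lin: "linear X"
    and min: "\<And>\<beta>. g ((norm (Y - X \<beta>hat))\<^sup>2) + pen \<beta>hat \<le> g ((norm (Y - X \<beta>))\<^sup>2) + pen \<beta>"
    and tangent: "\<And>s. s \<ge> 0 \<Longrightarrow> g s \<le> g ((norm (Y - X \<beta>hat))\<^sup>2) + w * (s - (norm (Y - X \<beta>hat))\<^sup>2)"
    and w: "w \<ge> 0"
    and convex: "convex_on UNIV pen"
  shows "pen \<beta>hat - pen \<beta> \<le> 2 * w * ((Y - X \<beta>hat) \<bullet> X (\<beta>hat - \<beta>))"
proof -
  define e v where "e = Y - X \<beta>hat" and "v = X (\<beta> - \<beta>hat)"
  have directional: "pen \<beta>hat - pen \<beta> \<le> -2 * w * (e \<bullet> v) + t * (w * (v \<bullet> v))" if t: "0 < t" "t \<le> 1" for t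
  proof -
    have resid: "Y - X ((1 - t) *\<^sub>R \<beta>hat + t *\<^sub>R \<beta>) = e - t *\<^sub>R v"
      by (simp add: e_def v_def linear_add[OF lin] linear_diff[OF lin] linear_scale[OF lin]
          algebra_simps)
    have "g ((norm (e - t *\<^sub>R v))\<^sup>2) \<le> g ((norm e)\<^sup>2) + w * ((norm (e - t *\<^sub>R v))\<^sup>2 - (norm e)\<^sup>2)"
      using tangent[of "(norm (e - t *\<^sub>R v))\<^sup>2"] by (simp add: e_def)
    also have "(norm (e - t *\<^sub>R v))\<^sup>2 - (norm e)\<^sup>2 = t\<^sup>2 * (v \<bullet> v) - 2 * t * (e \<bullet> v)"
      unfolding power2_norm_eq_inner
      by (simp add: inner_diff_left inner_diff_right inner_commute power2_eq_square algebra_simps)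
    finally have "g ((norm (e - t *\<^sub>R v))\<^sup>2) \<le> g ((norm e)\<^sup>2) + w * (t\<^sup>2 * (v \<bullet> v) - 2 * t * (e \<bullet> v))" .
    moreover have "pen ((1 - t) *\<^sub>R \<beta>hat + t *\<^sub>R \<beta>) \<le> (1 - t) * pen \<beta>hat + t * pen \<beta>"
      using t by (intro convex_onD[OF convex]) auto
    ultimately have "t * (pen \<beta>hat - pen \<beta>) \<le> t * (-2 * w * (e \<bullet> v) + t * (w * (v \<bullet> v)))"
      using min[of "(1 - t) *\<^sub>R \<beta>hat + t *\<^sub>R \<beta>"] resid
      by (simp add: e_def power2_eq_square algebra_simps)
    then show ?thesis
      using t by simp
  qed
  have "0 \<le> w * (v \<bullet> v)"
    using w by simp
  then have "pen \<beta>hat - pen \<beta> \<le> -2 * w * (e \<bullet> v)"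
    using directional by (rule le_of_le_add_mult)
  moreover have "X (\<beta>hat - \<beta>) = - v"
    by (simp add: v_def linear_diff[OF lin])
  ultimately show ?thesis
    by (simp add: e_def)
qed

lemma norm_sq_le_of_le_inner_add:
  fixes a b :: "'a::real_inner"
  assumes basic: "(norm a)\<^sup>2 \<le> a \<bullet> b + T" and u: "0 < u" "u < 1"
  shows "(norm a)\<^sup>2 \<le> (norm b)\<^sup>2 / (4 * u * (1 - u)) + T / (1 - u)"
proof -
  have "4 * u * (a \<bullet> b) \<le> 4 * u * (norm a * norm b)"
    using u norm_cauchy_schwarz[of a b] by simp
  also have "\<dots> \<le> 4 * u\<^sup>2 * (norm a)\<^sup>2 + (norm b)\<^sup>2"
    using sum_squares_ge_zero[of "2 * u * norm a - norm b" 0] by (simp add: power2_eq_square algebra_simps)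
  finally have "4 * u * (a \<bullet> b) \<le> 4 * u\<^sup>2 * (norm a)\<^sup>2 + (norm b)\<^sup>2" .
  moreover have "4 * u * (norm a)\<^sup>2 \<le> 4 * u * (a \<bullet> b) + 4 * u * T"
    using mult_left_mono[OF basic, of "4 * u"] u by (simp add: distrib_left)
  moreover have "4 * u * (1 - u) * (norm a)\<^sup>2 = 4 * u * (norm a)\<^sup>2 - 4 * u\<^sup>2 * (norm a)\<^sup>2"
    by (simp add: power2_eq_square algebra_simps)
  ultimately have "4 * u * (1 - u) * (norm a)\<^sup>2 \<le> (norm b)\<^sup>2 + 4 * u * T"
    by linarith
  then have "(norm a)\<^sup>2 \<le> ((norm b)\<^sup>2 + 4 * u * T) / (4 * u * (1 - u))"
    using u by (simp add: pos_le_divide_eq mult.commute)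
  also have "\<dots> = (norm b)\<^sup>2 / (4 * u * (1 - u)) + T / (1 - u)"
    using u by (simp add: add_divide_distrib)
  finally show ?thesis .
qed

lemma basic_inequality:
  fixes X :: "real^'p^'n" and A M :: "nat \<Rightarrow> real^'p^'p" and eps :: "real^'n"
    and q c :: "nat \<Rightarrow> real" and \<beta> \<beta>hat \<beta>star :: "real^'p"
  defines "D \<equiv> \<lambda>j. lq_dual_norm (q j) (transpose (X ** A j) *v eps)"
    and "N \<equiv> \<lambda>j. lq_norm (q j) (M j *v \<beta>)" and "Nh \<equiv> \<lambda>j. lq_norm (q j) (M j *v \<beta>hat)"
  assumes id: "(\<Sum>j<k. A j ** M j) = mat 1" and q: "\<And>j. j < k \<Longrightarrow> q j \<ge> 1"
    and D_nonneg: "\<And>j. j < k \<Longrightarrow> D j \<ge> 0"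
    and first_order: "(\<Sum>j<k. c j * D j * (Nh j - N j))
      \<le> (X *v (\<beta>star - \<beta>hat) + eps) \<bullet> (X *v (\<beta>hat - \<beta>))"
  shows "(norm (X *v (\<beta>star - \<beta>hat)))\<^sup>2 \<le> (X *v (\<beta>star - \<beta>hat)) \<bullet> (X *v (\<beta>star - \<beta>))
    + ((\<Sum>j<k. (1 + c j) * D j * N j) - (\<Sum>j<k. (c j - 1) * D j * Nh j))"
proof -
  define a b where "a = X *v (\<beta>star - \<beta>hat)" and "b = X *v (\<beta>star - \<beta>)"
  have ba: "X *v (\<beta>hat - \<beta>) = b - a"
    by (simp add: a_def b_def matrix_vector_mult_diff_distrib)
  have "q j > 0" if "j < k" for j
    using q[OF that] by simp
  from inner_matrix_le_sum_lq_dual_norm[OF id this, where X = X and e = eps and d = "\<beta>hat - \<beta>"]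
  have "eps \<bullet> (b - a) \<le> (\<Sum>j<k. D j * lq_norm (q j) (M j *v (\<beta>hat - \<beta>)))"
    by (simp add: D_def ba)
  also have "\<dots> \<le> (\<Sum>j<k. D j * (Nh j + N j))"
    using D_nonneg q lq_norm_triangle[of "q _" "M _ *v \<beta>hat" "- (M _ *v \<beta>)"]
    by (intro sum_mono mult_left_mono)
      (auto simp: N_def Nh_def lq_norm_uminus matrix_vector_mult_diff_distrib)
  finally have noise: "eps \<bullet> (b - a) \<le> (\<Sum>j<k. D j * (Nh j + N j))" .
  have "(a + eps) \<bullet> (b - a) = a \<bullet> b - (norm a)\<^sup>2 + eps \<bullet> (b - a)"
    by (simp add: power2_norm_eq_inner inner_add_left inner_diff_right)
  moreover have "(\<Sum>j<k. D j * (Nh j + N j)) - (\<Sum>j<k. c j * D j * (Nh j - N j))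
      = (\<Sum>j<k. (1 + c j) * D j * N j) - (\<Sum>j<k. (c j - 1) * D j * Nh j)"
    by (simp add: sum_subtractf[symmetric] algebra_simps)
  ultimately show ?thesis
    using first_order noise unfolding a_def[symmetric] b_def[symmetric] ba by linarith
qed

theorem theorem1:
  fixes X :: "real ^ 'p ^ 'n" and Y eps :: "real ^ 'n" and \<beta>star \<beta>hat :: "real ^ 'p"
    and g g' :: "real \<Rightarrow> real"
    and k :: nat and M P :: "nat \<Rightarrow> real ^ 'p ^ 'p" and q :: "nat \<Rightarrow> real"
    and c lam :: "nat \<Rightarrow> real"
  defines "D \<equiv> (\<lambda>j. lq_dual_norm (q j) (transpose (X ** P j ** pinv (M j)) *v eps))"
  assumes model: "Y = X *v \<beta>star + eps"
    and g_nonneg: "\<And>x. g x \<ge> 0"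
    and g0: "g 0 = 0"
    and g_cont: "continuous_on {0..} g"
    and g_mono: "strict_mono_on {0..} g"
    and g_deriv: "\<And>x. x > 0 \<Longrightarrow> (g has_real_derivative g' x) (at x)"
    and g'_cont: "continuous_on {0<..} g'"
    and g'_pos: "\<And>x. x > 0 \<Longrightarrow> g' x > 0"
    and g'_antimono: "\<And>x y. 0 < x \<Longrightarrow> x \<le> y \<Longrightarrow> g' y \<le> g' x"
    and g_strict_convex: "strict_convex_on UNIV (\<lambda>\<alpha>::real ^ 'n. g ((norm \<alpha>)\<^sup>2))"
    and k_pos: "k \<ge> 1"
    and ker: "\<And>x. (\<forall>j<k. M j *v x = 0) \<Longrightarrow> x = 0"
    and q_ge: "\<And>j. j < k \<Longrightarrow> q j \<ge> 1"
    and P_proj: "\<And>j. j < k \<Longrightarrow> P j ** P j = P j"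
    and P_sum: "(\<Sum>j<k. P j ** pinv (M j) ** M j) = mat 1"
    and noise_Y: "Y \<noteq> 0"
    and noise_D: "\<And>j. j < k \<Longrightarrow> D j > 0"
    and c_pos: "\<And>j. j < k \<Longrightarrow> c j > 0"
    and lam_pos: "\<And>j. j < k \<Longrightarrow> lam j > 0"
    and minimizer: "\<And>\<beta>. g ((norm (Y - X *v \<beta>hat))\<^sup>2) + (\<Sum>j<k. lam j * lq_norm (q j) (M j *v \<beta>hat))
                       \<le> g ((norm (Y - X *v \<beta>))\<^sup>2) + (\<Sum>j<k. lam j * lq_norm (q j) (M j *v \<beta>))"
    and resid_pos: "(norm (Y - X *v \<beta>hat))\<^sup>2 > 0"
    and lam_choice: "\<And>j. j < k \<Longrightarrow>
        lam j / (2 * g' ((norm (Y - X *v \<beta>hat))\<^sup>2)) = c j * D j"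
  shows "\<forall>u\<in>{0<..<1::real}. \<forall>\<beta>::real ^ 'p.
     (1 / real CARD('n)) * (norm (X *v (\<beta>star - \<beta>hat)))\<^sup>2
     \<le> 1 / (4 * u * (1 - u) * real CARD('n)) * (norm (X *v (\<beta>star - \<beta>)))\<^sup>2
       + (1 / real CARD('n)) * (\<Sum>j<k. (1 + c j) / (1 - u) * D j * lq_norm (q j) (M j *v \<beta>))
       - (1 / real CARD('n)) * (\<Sum>j<k. (c j - 1) / (1 - u) * D j * lq_norm (q j) (M j *v \<beta>hat))"
proof (intro ballI allI)
  fix u :: real and \<beta> :: "real ^ 'p"
  assume "u \<in> {0<..<1}"
  then have u: "0 < u" "u < 1" by auto
  define w where "w = g' ((norm (Y - X *v \<beta>hat))\<^sup>2)"
  define pen where "pen = (\<lambda>\<gamma>. \<Sum>j<k. lam j * lq_norm (q j) (M j *v \<gamma>))"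
  define N Nh where "N = (\<lambda>j. lq_norm (q j) (M j *v \<beta>))" and "Nh = (\<lambda>j. lq_norm (q j) (M j *v \<beta>hat))"
  have w: "w > 0"
    using g'_pos resid_pos by (simp add: w_def)
  have "convex_on UNIV pen"
    unfolding pen_def using lam_pos q_ge
    by (intro convex_on_sum_fun convex_on_cmul convex_on_compose_linear[OF matrix_vector_mul_linear]
        convex_on_lq_norm) (auto simp: less_imp_le)
  then have "pen \<beta>hat - pen \<beta> \<le> 2 * w * ((Y - X *v \<beta>hat) \<bullet> (X *v (\<beta>hat - \<beta>)))"
    using minimizer w le_tangent_of_deriv_antimono[OF g_cont g_deriv g'_antimono resid_pos]
    by (intro penalized_first_order_condition[OF matrix_vector_mul_linear]) (auto simp: pen_def w_def)
  moreover have "pen \<beta>hat - pen \<beta> = 2 * w * (\<Sum>j<k. c j * D j * (Nh j - N j))"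
    using lam_choice w by (simp add: pen_def N_def Nh_def w_def sum_distrib_left
        sum_subtractf[symmetric] field_simps)
  moreover have "Y - X *v \<beta>hat = X *v (\<beta>star - \<beta>hat) + eps"
    by (simp add: model matrix_vector_mult_diff_distrib)
  ultimately have "(\<Sum>j<k. c j * D j * (Nh j - N j))
      \<le> (X *v (\<beta>star - \<beta>hat) + eps) \<bullet> (X *v (\<beta>hat - \<beta>))"
    using w by simp
  with basic_inequality[where A = "\<lambda>j. P j ** pinv (M j)" and q = q and X = X and eps = eps
      and c = c and \<beta> = \<beta> and \<beta>hat = \<beta>hat and \<beta>star = \<beta>star, OF P_sum q_ge] noise_D
  have "(norm (X *v (\<beta>star - \<beta>hat)))\<^sup>2 \<le> (X *v (\<beta>star - \<beta>hat)) \<bullet> (X *v (\<beta>star - \<beta>))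
      + ((\<Sum>j<k. (1 + c j) * D j * N j) - (\<Sum>j<k. (c j - 1) * D j * Nh j))"
    by (simp add: D_def N_def Nh_def matrix_mul_assoc less_imp_le)
  from norm_sq_le_of_le_inner_add[OF this u]
  have "(1 / real CARD('n)) * (norm (X *v (\<beta>star - \<beta>hat)))\<^sup>2
      \<le> (1 / real CARD('n)) * ((norm (X *v (\<beta>star - \<beta>)))\<^sup>2 / (4 * u * (1 - u))
      + (\<Sum>j<k. (1 + c j) * D j * N j) / (1 - u) - (\<Sum>j<k. (c j - 1) * D j * Nh j) / (1 - u))"
    by (intro mult_left_mono) (simp_all add: diff_divide_distrib)
  then show "(1 / real CARD('n)) * (norm (X *v (\<beta>star - \<beta>hat)))\<^sup>2
     \<le> 1 / (4 * u * (1 - u) * real CARD('n)) * (norm (X *v (\<beta>star - \<beta>)))\<^sup>2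
       + (1 / real CARD('n)) * (\<Sum>j<k. (1 + c j) / (1 - u) * D j * lq_norm (q j) (M j *v \<beta>))
       - (1 / real CARD('n)) * (\<Sum>j<k. (c j - 1) / (1 - u) * D j * lq_norm (q j) (M j *v \<beta>hat))"
    by (simp add: N_def Nh_def sum_divide_distrib right_diff_distrib distrib_left ac_simps)
qed

end
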